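(* Let $\varepsilon\in(0,1)$, $\alpha\in(0,1/5)$, $d$ with $\alpha d\ge1$, and let $G=(V,E)$ be a graph with no isolated vertices, $V=W\cup B$ a partition, $n=|V|$, such that: $G$ is an $(n,d,\alpha)$-expander; $G[W]$ has maximum degree $d_{\max}$ and minimum degree at least $2(\varepsilon+\alpha)d$; with $\delta=\varepsilon d/(d_{\max}-2\varepsilon d)$ we have $\frac{8(1+\delta)(d_{\max}+1)}{\delta^2\exp(\frac{\varepsilon}{40\alpha}\log(1+\delta))}\le1$ and $\frac{8}{d_{\max}-4\varepsilon d}\le 1$; and (B1) $|B|\le\alpha n$, (B2) no edge has both endpoints in $B$, (B3) $\deg v\le d_{\max}+1$ for all $v\in B$, (B4) $|N(v)\cap B|\le1$ for all $v\in V$. Then $G[W]$ is a $(|W|,d,2\alpha)$-expander.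
   Context: $\|M\|$ is the spectral norm, $J$ the all-ones matrix of the appropriate size, $A_H$ the adjacency matrix of $H$. A graph $H$ is an $(m,d,\alpha)$-expander if it has $m$ vertices and $\|A_H-\frac dm J\|\le\alpha d$. $G[W]$ is the induced subgraph on $W$; $N(v)$ is the neighborhood of $v$ in $G$. *)

theory Defs
  imports Complex_Main
begin

definition simple_graph :: "'a set \<Rightarrow> ('a \<Rightarrow> 'a \<Rightarrow> bool) \<Rightarrow> bool" where
  "simple_graph V E \<longleftrightarrow> finite V \<and> (\<forall>u v. E u v \<longrightarrow> u \<in> V \<and> v \<in> V)
     \<and> (\<forall>u v. E u v \<longrightarrow> E v u) \<and> (\<forall>v. \<not> E v v)"

definition induced :: "('a \<Rightarrow> 'a \<Rightarrow> bool) \<Rightarrow> 'a set \<Rightarrow> 'a \<Rightarrow> 'a \<Rightarrow> bool" where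
  "induced E W = (\<lambda>u v. u \<in> W \<and> v \<in> W \<and> E u v)"

definition nbhd :: "'a set \<Rightarrow> ('a \<Rightarrow> 'a \<Rightarrow> bool) \<Rightarrow> 'a \<Rightarrow> 'a set" where
  "nbhd V E v = {u \<in> V. E v u}"

definition degree :: "'a set \<Rightarrow> ('a \<Rightarrow> 'a \<Rightarrow> bool) \<Rightarrow> 'a \<Rightarrow> nat" where
  "degree V E v = card (nbhd V E v)"

definition adj :: "('a \<Rightarrow> 'a \<Rightarrow> bool) \<Rightarrow> 'a \<Rightarrow> 'a \<Rightarrow> real" where
  "adj E u v = (if E u v then 1 else 0)"

definition spec_norm :: "'a set \<Rightarrow> ('a \<Rightarrow> 'a \<Rightarrow> real) \<Rightarrow> real" where
  "spec_norm S M = Sup {sqrt (\<Sum>i\<in>S. (\<Sum>j\<in>S. M i j * x j)^2) | x.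
      (\<Sum>j\<in>S. (x j)^2) \<le> 1}"

definition expander :: "'a set \<Rightarrow> ('a \<Rightarrow> 'a \<Rightarrow> bool) \<Rightarrow> nat \<Rightarrow> real \<Rightarrow> real \<Rightarrow> bool" where
  "expander S E m d \<alpha> \<longleftrightarrow> card S = m \<and>
     spec_norm S (\<lambda>u v. adj E u v - d / real m) \<le> \<alpha> * d"

end

theory Submission
  imports Defs "HOL-Analysis.L2_Norm"
begin

text \<open>Only the expansion of G and (B1) matter. Writing m = |W|,
  \<open>A\<^sub>W - (d/m) J = (A - (d/n) J)|\<^sub>W - (d/m - d/n) J\<^sub>W\<close>.
  A principal submatrix has no larger spectral norm than the whole matrix, so the first
  term has norm at most \<open>\<alpha> d\<close>; the all-ones matrix on W has norm m, so the second
  term has norm \<open>(d/m - d/n) m = d |B| / n \<le> \<alpha> d\<close>.\<close>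

lemma spec_norm_bdd_above:
  assumes "finite S"
  shows "bdd_above {sqrt (\<Sum>i\<in>S. (\<Sum>j\<in>S. M i j * x j)^2) | x. (\<Sum>j\<in>S. (x j)^2) \<le> 1}"
proof -
  have "L2_set (\<lambda>i. \<bar>\<Sum>j\<in>S. M i j * x j\<bar>) S \<le> L2_set (\<lambda>i. L2_set (M i) S) S"
    if "L2_set x S \<le> 1" for x
  proof (rule L2_set_mono)
    fix i
    have "\<bar>\<Sum>j\<in>S. M i j * x j\<bar> \<le> (\<Sum>j\<in>S. \<bar>M i j\<bar> * \<bar>x j\<bar>)"
      using sum_abs[of "\<lambda>j. M i j * x j" S] by (simp add: abs_mult)
    also have "\<dots> \<le> L2_set (M i) S * L2_set x S"
      by (rule L2_set_mult_ineq)
    also have "\<dots> \<le> L2_set (M i) S"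
      using that by (simp add: mult_left_le)
    finally show "\<bar>\<Sum>j\<in>S. M i j * x j\<bar> \<le> L2_set (M i) S" .
  qed simp
  then show ?thesis
    by (intro bdd_aboveI[of _ "L2_set (\<lambda>i. L2_set (M i) S) S"]) (auto simp: L2_set_def power2_abs)
qed

lemma spec_norm_upper:
  assumes "finite S" "L2_set x S \<le> 1"
  shows "L2_set (\<lambda>i. \<Sum>j\<in>S. M i j * x j) S \<le> spec_norm S M"
  unfolding spec_norm_def L2_set_def
  by (rule cSup_upper) (use assms spec_norm_bdd_above[OF assms(1)] in \<open>auto simp: L2_set_def\<close>)

lemma spec_norm_least:
  assumes "\<And>x. L2_set x S \<le> 1 \<Longrightarrow> L2_set (\<lambda>i. \<Sum>j\<in>S. M i j * x j) S \<le> c"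
  shows "spec_norm S M \<le> c"
  unfolding spec_norm_def
proof (rule cSup_least)
  show "{sqrt (\<Sum>i\<in>S. (\<Sum>j\<in>S. M i j * x j)\<^sup>2) |x. (\<Sum>j\<in>S. (x j)\<^sup>2) \<le> 1} \<noteq> {}"
    by (auto intro!: exI[of _ "\<lambda>_. 0"])
qed (use assms in \<open>auto simp: L2_set_def\<close>)

lemma spec_norm_cong:
  assumes "\<And>i j. i \<in> S \<Longrightarrow> j \<in> S \<Longrightarrow> M i j = N i j"
  shows "spec_norm S M = spec_norm S N"
  unfolding spec_norm_def using assms by simp

lemma spec_norm_principal_submatrix_le:
  assumes "finite S" "T \<subseteq> S"
  shows "spec_norm T M \<le> spec_norm S M"
proof (rule spec_norm_least)
  fix x
  assume x: "L2_set x T \<le> 1"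
  define x' where "x' j = (if j \<in> T then x j else 0)" for j
  have extend: "(\<Sum>j\<in>S. f j * x' j) = (\<Sum>j\<in>T. f j * x j)" for f :: "'a \<Rightarrow> real"
    by (rule sum.mono_neutral_cong_right[OF assms]) (auto simp: x'_def)
  have "L2_set (\<lambda>i. \<Sum>j\<in>T. M i j * x j) T \<le> L2_set (\<lambda>i. \<Sum>j\<in>T. M i j * x j) S"
    unfolding L2_set_def using assms by (intro real_sqrt_le_mono sum_mono2) auto
  also have "\<dots> = L2_set (\<lambda>i. \<Sum>j\<in>S. M i j * x' j) S"
    by (simp add: extend)
  also have "\<dots> \<le> spec_norm S M"
  proof (rule spec_norm_upper[OF assms(1)])
    have "L2_set x' S = L2_set x T"
      using extend[of x'] extend[of x] unfolding L2_set_def power2_eq_square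
      by (simp add: x'_def)
    then show "L2_set x' S \<le> 1" using x by simp
  qed
  finally show "L2_set (\<lambda>i. \<Sum>j\<in>T. M i j * x j) T \<le> spec_norm S M" .
qed

lemma spec_norm_add_le:
  assumes "finite S"
  shows "spec_norm S (\<lambda>i j. M i j + N i j) \<le> spec_norm S M + spec_norm S N"
proof (rule spec_norm_least)
  fix x
  assume x: "L2_set x S \<le> 1"
  have "L2_set (\<lambda>i. \<Sum>j\<in>S. (M i j + N i j) * x j) S
      = L2_set (\<lambda>i. (\<Sum>j\<in>S. M i j * x j) + (\<Sum>j\<in>S. N i j * x j)) S"
    by (simp add: distrib_right sum.distrib)
  also have "\<dots> \<le> L2_set (\<lambda>i. \<Sum>j\<in>S. M i j * x j) S + L2_set (\<lambda>i. \<Sum>j\<in>S. N i j * x j) S"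
    by (rule L2_set_triangle_ineq)
  also have "\<dots> \<le> spec_norm S M + spec_norm S N"
    using spec_norm_upper[OF assms x] by (intro add_mono)
  finally show "L2_set (\<lambda>i. \<Sum>j\<in>S. (M i j + N i j) * x j) S
      \<le> spec_norm S M + spec_norm S N" .
qed

lemma spec_norm_const_le: "spec_norm S (\<lambda>_ _. c) \<le> \<bar>c\<bar> * real (card S)"
proof (rule spec_norm_least)
  fix x
  assume x: "L2_set x S \<le> 1"
  have "\<bar>\<Sum>j\<in>S. x j\<bar> \<le> L2_set x S * L2_set (\<lambda>_. 1) S"
    by (rule order_trans[OF sum_abs]) (use L2_set_mult_ineq[of x "\<lambda>_. 1" S] in simp)
  also have "\<dots> \<le> sqrt (real (card S))"
    using x by (simp add: L2_set_constant mult_left_le_one_le)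
  finally have "\<bar>\<Sum>j\<in>S. x j\<bar> \<le> sqrt (real (card S))" .
  have "L2_set (\<lambda>i. \<Sum>j\<in>S. c * x j) S = sqrt (real (card S)) * \<bar>c * (\<Sum>j\<in>S. x j)\<bar>"
    by (simp add: L2_set_constant flip: sum_distrib_left)
  also have "\<dots> \<le> sqrt (real (card S)) * (\<bar>c\<bar> * sqrt (real (card S)))"
    using \<open>\<bar>\<Sum>j\<in>S. x j\<bar> \<le> sqrt (real (card S))\<close> by (simp add: abs_mult mult_left_mono)
  also have "\<dots> = \<bar>c\<bar> * real (card S)"
    by simp
  finally show "L2_set (\<lambda>i. \<Sum>j\<in>S. c * x j) S \<le> \<bar>c\<bar> * real (card S)" .
qed

lemma rank_one_correction_le:
  fixes d \<beta> :: real and m n :: nat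
  assumes "0 \<le> d" "0 \<le> \<beta>" "m \<le> n" "real (n - m) \<le> \<beta> * real n"
  shows "\<bar>d / real n - d / real m\<bar> * real m \<le> \<beta> * d"
proof (cases "m = 0")
  case True
  then show ?thesis using assms by simp
next
  case False
  then have pos: "0 < real m" "real m \<le> real n" using assms(3) by auto
  then have "d / real n \<le> d / real m"
    using assms(1) by (intro divide_left_mono) auto
  then have "\<bar>d / real n - d / real m\<bar> * real m = (d / real m - d / real n) * real m"
    by simp
  also have "\<dots> = d * (real n - real m) / real n"
    using pos by (simp add: field_simps)
  also have "\<dots> = d * real (n - m) / real n"
    using assms(3) by (simp add: of_nat_diff)
  also have "\<dots> \<le> d * (\<beta> * real n) / real n"
    using assms by (intro divide_right_mono mult_left_mono) auto
  also have "\<dots> = \<beta> * d"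
    using pos by simp
  finally show ?thesis .
qed

lemma expander_induced_subgraph:
  assumes "expander S E n d \<alpha>" "finite S" "T \<subseteq> S" "0 \<le> d" "0 \<le> \<beta>"
    and "real (card (S - T)) \<le> \<beta> * real n"
  shows "expander T (induced E T) (card T) d (\<alpha> + \<beta>)"
proof -
  define m where "m = card T"
  have n: "n = card S" and norm_S: "spec_norm S (\<lambda>u v. adj E u v - d / real n) \<le> \<alpha> * d"
    using assms(1) by (auto simp: expander_def)
  have "finite T" using assms(2,3) finite_subset by blast
  have "m \<le> n" "card (S - T) = n - m"
    using assms(2,3) by (auto simp: m_def n card_mono card_Diff_subset finite_subset)
  have "spec_norm T (\<lambda>u v. adj (induced E T) u v - d / real m)
      = spec_norm T (\<lambda>u v. (adj E u v - d / real n) + (d / real n - d / real m))"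
    by (rule spec_norm_cong) (simp add: adj_def induced_def)
  also have "\<dots> \<le> spec_norm T (\<lambda>u v. adj E u v - d / real n)
      + spec_norm T (\<lambda>_ _. d / real n - d / real m)"
    using \<open>finite T\<close> by (rule spec_norm_add_le)
  also have "\<dots> \<le> \<alpha> * d + \<bar>d / real n - d / real m\<bar> * real m"
    using order_trans[OF spec_norm_principal_submatrix_le[OF assms(2,3)] norm_S]
      spec_norm_const_le[of T]
    by (intro add_mono) (auto simp: m_def)
  also have "\<dots> \<le> \<alpha> * d + \<beta> * d"
    using rank_one_correction_le[OF assms(4,5) \<open>m \<le> n\<close>] assms(6) \<open>card (S - T) = n - m\<close>
    by simp
  finally show ?thesis
    by (simp add: expander_def m_def distrib_right)
qed

theorem lemma2p4:
  fixes V W B :: "'a set" and E :: "'a \<Rightarrow> 'a \<Rightarrow> bool"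
    and \<epsilon> \<alpha> d :: real and dmax n :: nat
  assumes graph: "simple_graph V E"
    and no_isolated: "\<forall>v\<in>V. \<exists>u\<in>V. E v u"
    and eps: "0 < \<epsilon>" "\<epsilon> < 1"
    and alpha: "0 < \<alpha>" "\<alpha> < 1/5"
    and alpha_d: "\<alpha> * d \<ge> 1"
    and partition: "V = W \<union> B" "W \<inter> B = {}"
    and n_def: "n = card V"
    and expG: "expander V E n d \<alpha>"
    and dmax_bound: "\<forall>v\<in>W. degree W (induced E W) v \<le> dmax"
    and dmax_attained: "\<exists>v\<in>W. degree W (induced E W) v = dmax"
    and mindeg: "\<forall>v\<in>W. real (degree W (induced E W) v) \<ge> 2 * (\<epsilon> + \<alpha>) * d"
    and cond1: "let \<delta> = \<epsilon> * d / (real dmax - 2 * \<epsilon> * d) in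
       8 * (1 + \<delta>) * (real dmax + 1) / (\<delta>^2 * exp (\<epsilon> / (40 * \<alpha>) * ln (1 + \<delta>))) \<le> 1"
    and cond2: "8 / (real dmax - 4 * \<epsilon> * d) \<le> 1"
    and B1: "real (card B) \<le> \<alpha> * real n"
    and B2: "\<forall>u\<in>B. \<forall>v\<in>B. \<not> E u v"
    and B3: "\<forall>v\<in>B. real (degree V E v) \<le> real dmax + 1"
    and B4: "\<forall>v\<in>V. card (nbhd V E v \<inter> B) \<le> 1"
  shows "expander W (induced E W) (card W) d (2 * \<alpha>)"
proof -
  have "finite V" using graph by (simp add: simple_graph_def)
  have "0 < d"
    using alpha(1) alpha_d zero_less_mult_pos[of \<alpha> d] by linarith
  have "W \<subseteq> V" "V - W = B"
    using partition by auto
  then have "real (card (V - W)) \<le> \<alpha> * real n"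
    using B1 by simp
  then have "expander W (induced E W) (card W) d (\<alpha> + \<alpha>)"
    using \<open>0 < d\<close> alpha(1)
    by (intro expander_induced_subgraph[OF expG \<open>finite V\<close> \<open>W \<subseteq> V\<close>]) auto
  then show ?thesis
    by (simp only: mult_2)
qed

end
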